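(* Let $(X,<)$ be a linearly ordered set. For all non-principal ultrafilters $u,v$ over $X$, $$(u\,\tilde<\,v\ \vee\ u\,\tilde>\,v)\ \wedge\ \neg(u\,\tilde<\,v\ \wedge\ u\,\tilde>\,v).$$ More precisely, if $\mathrm{supp}(u)\ne\mathrm{supp}(v)$ then $$u\,\tilde<\,v\iff v\,\tilde>\,u\iff\neg(v\,\tilde<\,u)\iff\neg(u\,\tilde>\,v)\iff\mathrm{supp}(u)<\mathrm{supp}(v),$$ and if $\mathrm{supp}(u)=\mathrm{supp}(v)$ then $$u\,\tilde<\,v\iff\neg(u\,\tilde>\,v)\iff \mathrm{supp}(u)=\mathrm{supp}(v)=I_u=I_v,$$ $$u\,\tilde>\,v\iff\neg(u\,\tilde<\,v)\iff \mathrm{supp}(u)=\mathrm{supp}(v)=J_u=J_v.$$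
   Context: $\beta X$ is the set of ultrafilters over $X$; $\tilde x=\{S\subseteq X:x\in S\}$. For a binary relation $R$ on $X$, $u\,\tilde R\,v\iff\{x\in X:\{y\in X:x\,R\,y\}\in v\}\in u$; here $R$ is $<$ or $>$. $I_u=\bigcap\{I\in u: I\text{ initial segment of }X\}$, $J_u=\bigcap\{J\in u: J\text{ final segment of }X\}$; for non-principal $u$ exactly one of $I_u\in u$, $J_u\in u$ holds. Supports: $\mathrm{supp}(\tilde x)=\{x\}$; for non-principal $u$, $\mathrm{supp}(u)$ is $I_u$ regarded as a left half-cut if $I_u\in u$, and $J_u$ regarded as a right half-cut if $J_u\in u$; supports are equal iff of the same kind and equal as sets. "$\mathrm{supp}(u)=\mathrm{supp}(v)=I_u=I_v$" means $u,v$ non-principal, $I_u\in u$, $I_v\in v$, $I_u=I_v$; similarly for $J$. Order on supports: $\{x\}<\{y\}$ iff $x<y$; $\{x\}<I$ iff $x\in I$, $I<\{x\}$ iff $x\notin I$; $\{x\}<J$ iff $x\notin J$, $J<\{x\}$ iff $x\in J$; $I<I'$ iff $I\subsetneq I'$; $J<J'$ iff $J\supsetneq J'$; $I<J$ iff $I\cap J=\emptyset$, $J<I$ iff $I\cap J\ne\emptyset$. *)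

theory Defs
  imports Main
begin

definition ultrafilter :: "'a set set \<Rightarrow> bool" where
  "ultrafilter U \<longleftrightarrow> UNIV \<in> U \<and> {} \<notin> U
     \<and> (\<forall>A B. A \<in> U \<and> B \<in> U \<longrightarrow> A \<inter> B \<in> U)
     \<and> (\<forall>A B. A \<in> U \<and> A \<subseteq> B \<longrightarrow> B \<in> U)
     \<and> (\<forall>A. A \<in> U \<or> - A \<in> U)"

definition principal_uf :: "'a \<Rightarrow> 'a set set" where
  "principal_uf x = {S. x \<in> S}"

definition principal :: "'a set set \<Rightarrow> bool" where
  "principal U \<longleftrightarrow> (\<exists>x. U = principal_uf x)"

definition rel_ext :: "('a \<Rightarrow> 'a \<Rightarrow> bool) \<Rightarrow> 'a set set \<Rightarrow> 'a set set \<Rightarrow> bool" where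
  "rel_ext R u v \<longleftrightarrow> {x. {y. R x y} \<in> v} \<in> u"

abbreviation uless :: "'a::linorder set set \<Rightarrow> 'a set set \<Rightarrow> bool" where
  "uless u v \<equiv> rel_ext (<) u v"

abbreviation ugreater :: "'a::linorder set set \<Rightarrow> 'a set set \<Rightarrow> bool" where
  "ugreater u v \<equiv> rel_ext (>) u v"

definition initial_seg :: "'a::linorder set \<Rightarrow> bool" where
  "initial_seg I \<longleftrightarrow> (\<forall>x y. y \<in> I \<and> x \<le> y \<longrightarrow> x \<in> I)"

definition final_seg :: "'a::linorder set \<Rightarrow> bool" where
  "final_seg J \<longleftrightarrow> (\<forall>x y. y \<in> J \<and> y \<le> x \<longrightarrow> x \<in> J)"

definition I_of :: "'a::linorder set set \<Rightarrow> 'a set" where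
  "I_of u = \<Inter>{I \<in> u. initial_seg I}"

definition J_of :: "'a::linorder set set \<Rightarrow> 'a set" where
  "J_of u = \<Inter>{J \<in> u. final_seg J}"

text \<open>Supports: a point, a left half-cut (given by an initial segment),
  or a right half-cut (given by a final segment).\<close>
datatype 'a support = Pt 'a | LeftCut "'a set" | RightCut "'a set"

definition supp :: "'a::linorder set set \<Rightarrow> 'a support" where
  "supp u = (if principal u then Pt (THE x. u = principal_uf x)
             else if I_of u \<in> u then LeftCut (I_of u) else RightCut (J_of u))"

fun supp_less :: "'a::linorder support \<Rightarrow> 'a support \<Rightarrow> bool" where
  "supp_less (Pt x) (Pt y) \<longleftrightarrow> x < y"
| "supp_less (Pt x) (LeftCut I) \<longleftrightarrow> x \<in> I"
| "supp_less (LeftCut I) (Pt x) \<longleftrightarrow> x \<notin> I"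
| "supp_less (Pt x) (RightCut J) \<longleftrightarrow> x \<notin> J"
| "supp_less (RightCut J) (Pt x) \<longleftrightarrow> x \<in> J"
| "supp_less (LeftCut I) (LeftCut I') \<longleftrightarrow> I \<subset> I'"
| "supp_less (RightCut J) (RightCut J') \<longleftrightarrow> J \<supset> J'"
| "supp_less (LeftCut I) (RightCut J) \<longleftrightarrow> I \<inter> J = {}"
| "supp_less (RightCut J) (LeftCut I) \<longleftrightarrow> I \<inter> J \<noteq> {}"

end

theory Submission imports Defs begin

text \<open>If \<open>v\<close> is non-principal then \<open>{x} \<notin> v\<close>, so for every \<open>x\<close> exactly one of the rays
  \<open>{y. y < x}\<close>, \<open>{y. x < y}\<close> belongs to \<open>v\<close>. This gives \<open>{x. {y. x < y} \<in> v} = I_of v\<close> and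
  \<open>{x. {y. y < x} \<in> v} = J_of v = - I_of v\<close>: thus \<open>uless u v\<close> means \<open>I_of v \<in> u\<close> and
  \<open>ugreater u v\<close> means \<open>- I_of v \<in> u\<close>, and exactly one of them holds. The comparison with
  the supports then follows since \<open>I_of u\<close> and \<open>I_of v\<close> are comparable initial segments, and
  an ultrafilter containing \<open>I_of u\<close> (resp. \<open>J_of u\<close>) contains an initial (resp. final) segment
  exactly when the segment includes \<open>I_of u\<close> (resp. \<open>J_of u\<close>).\<close>

lemma ultrafilter_mono: "ultrafilter u \<Longrightarrow> A \<in> u \<Longrightarrow> A \<subseteq> B \<Longrightarrow> B \<in> u"
  unfolding ultrafilter_def by blast

lemma ultrafilter_Int_iff: "ultrafilter u \<Longrightarrow> A \<inter> B \<in> u \<longleftrightarrow> A \<in> u \<and> B \<in> u"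
  unfolding ultrafilter_def by (metis Int_lower1 Int_lower2)

lemma ultrafilter_Compl_iff: "ultrafilter u \<Longrightarrow> - A \<in> u \<longleftrightarrow> A \<notin> u"
  using ultrafilter_Int_iff[of u A "- A"] unfolding ultrafilter_def by auto

lemma nonprincipal_singleton_notin:
  assumes u: "ultrafilter u" and np: "\<not> principal u"
  shows "{x} \<notin> u"
proof
  assume x: "{x} \<in> u"
  have "S \<in> u \<longleftrightarrow> x \<in> S" for S
    using ultrafilter_Int_iff[OF u, of S "{x}"] ultrafilter_mono[OF u x, of S] x u
    by (cases "x \<in> S") (auto simp: ultrafilter_def Int_absorb1 Int_insert_right)
  then have "u = principal_uf x"
    unfolding principal_uf_def by auto
  with np show False
    unfolding principal_def by blast
qed

lemma nonprincipal_below_iff_not_above: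
  fixes x :: "'a::linorder"
  assumes u: "ultrafilter u" and np: "\<not> principal u"
  shows "{y. y < x} \<in> u \<longleftrightarrow> {y. x < y} \<notin> u"
proof -
  have "{y. y < x} \<inter> {y. x < y} = {}"
    by auto
  then have "{y. y < x} \<inter> {y. x < y} \<notin> u"
    using u unfolding ultrafilter_def by simp
  moreover have "- {y. y < x} \<inter> - {y. x < y} \<notin> u"
  proof -
    have "- {y. y < x} \<inter> - {y. x < y} = {x}"
      by auto
    then show ?thesis
      using nonprincipal_singleton_notin[OF u np] by simp
  qed
  ultimately show ?thesis
    using ultrafilter_Int_iff[OF u] ultrafilter_Compl_iff[OF u] by blast
qed

lemma initial_seg_lessThan: "initial_seg {y. y < x}"
  unfolding initial_seg_def by auto

lemma final_seg_greaterThan: "final_seg {y. x < y}"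
  unfolding final_seg_def by auto

lemma initial_seg_I_of: "initial_seg (I_of u)"
  unfolding initial_seg_def I_of_def by blast

lemma final_seg_Compl: "initial_seg A \<Longrightarrow> final_seg (- A)"
  unfolding initial_seg_def final_seg_def by auto

lemma initial_seg_linear: "initial_seg (A::'a::linorder set) \<Longrightarrow> initial_seg B \<Longrightarrow> A \<subseteq> B \<or> B \<subseteq> A"
  unfolding initial_seg_def by (meson linear subsetI)

lemma mem_I_of_iff:
  fixes x :: "'a::linorder"
  assumes u: "ultrafilter u"
  shows "x \<in> I_of u \<longleftrightarrow> {y. y < x} \<notin> u"
proof
  show "x \<in> I_of u \<Longrightarrow> {y. y < x} \<notin> u"
    using initial_seg_lessThan[of x] unfolding I_of_def by auto
next
  assume below: "{y. y < x} \<notin> u"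
  have "x \<in> I" if "I \<in> u" "initial_seg I" for I
  proof (rule ccontr)
    assume "x \<notin> I"
    with \<open>initial_seg I\<close> have "I \<subseteq> {y. y < x}"
      unfolding initial_seg_def using not_le by blast
    with below ultrafilter_mono[OF u \<open>I \<in> u\<close>] show False by blast
  qed
  then show "x \<in> I_of u"
    unfolding I_of_def by blast
qed

lemma mem_J_of_iff:
  fixes x :: "'a::linorder"
  assumes u: "ultrafilter u"
  shows "x \<in> J_of u \<longleftrightarrow> {y. x < y} \<notin> u"
proof
  show "x \<in> J_of u \<Longrightarrow> {y. x < y} \<notin> u"
    using final_seg_greaterThan[of x] unfolding J_of_def by auto
next
  assume above: "{y. x < y} \<notin> u"
  have "x \<in> J" if "J \<in> u" "final_seg J" for J
  proof (rule ccontr)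
    assume "x \<notin> J"
    with \<open>final_seg J\<close> have "J \<subseteq> {y. x < y}"
      unfolding final_seg_def using not_le by blast
    with above ultrafilter_mono[OF u \<open>J \<in> u\<close>] show False by blast
  qed
  then show "x \<in> J_of u"
    unfolding J_of_def by blast
qed

lemma nonprincipal_above_set_eq_I_of:
  fixes v :: "'a::linorder set set"
  assumes "ultrafilter v" and "\<not> principal v"
  shows "{x. {y. x < y} \<in> v} = I_of v"
  using mem_I_of_iff[OF assms(1)] nonprincipal_below_iff_not_above[OF assms] by blast

lemma nonprincipal_J_of_eq:
  fixes v :: "'a::linorder set set"
  assumes "ultrafilter v" and "\<not> principal v"
  shows "J_of v = - I_of v"
  using mem_I_of_iff[OF assms(1)] mem_J_of_iff[OF assms(1)]
    nonprincipal_below_iff_not_above[OF assms] by blast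

lemma nonprincipal_below_set_eq_J_of:
  fixes v :: "'a::linorder set set"
  assumes "ultrafilter v" and "\<not> principal v"
  shows "{x. {y. y < x} \<in> v} = J_of v"
  using mem_J_of_iff[OF assms(1)] nonprincipal_below_iff_not_above[OF assms] by blast

lemma uless_nonprincipal_iff:
  "ultrafilter v \<Longrightarrow> \<not> principal v \<Longrightarrow> uless u v \<longleftrightarrow> I_of v \<in> u"
  unfolding rel_ext_def by (simp add: nonprincipal_above_set_eq_I_of)

lemma ugreater_nonprincipal_iff:
  "ultrafilter v \<Longrightarrow> \<not> principal v \<Longrightarrow> ugreater u v \<longleftrightarrow> - I_of v \<in> u"
  unfolding rel_ext_def
  by (simp add: nonprincipal_below_set_eq_J_of nonprincipal_J_of_eq)

lemma supp_nonprincipal: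
  "ultrafilter u \<Longrightarrow> \<not> principal u \<Longrightarrow>
    supp u = (if I_of u \<in> u then LeftCut (I_of u) else RightCut (- I_of u))"
  unfolding supp_def by (simp add: nonprincipal_J_of_eq)

lemma initial_seg_mem_iff:
  "ultrafilter u \<Longrightarrow> I_of u \<in> u \<Longrightarrow> initial_seg A \<Longrightarrow> A \<in> u \<longleftrightarrow> I_of u \<subseteq> A"
  unfolding I_of_def using ultrafilter_mono by blast

lemma final_seg_mem_iff:
  "ultrafilter u \<Longrightarrow> J_of u \<in> u \<Longrightarrow> final_seg A \<Longrightarrow> A \<in> u \<longleftrightarrow> J_of u \<subseteq> A"
  unfolding J_of_def using ultrafilter_mono by blast

theorem corollary1:
  fixes u v :: "'a::linorder set set"
  assumes "ultrafilter u" and "ultrafilter v"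
    and "\<not> principal u" and "\<not> principal v"
  shows "(uless u v \<or> ugreater u v) \<and> \<not> (uless u v \<and> ugreater u v)
    \<and> (supp u \<noteq> supp v \<longrightarrow>
           (uless u v \<longleftrightarrow> ugreater v u)
         \<and> (ugreater v u \<longleftrightarrow> \<not> uless v u)
         \<and> (\<not> uless v u \<longleftrightarrow> \<not> ugreater u v)
         \<and> (\<not> ugreater u v \<longleftrightarrow> supp_less (supp u) (supp v)))
    \<and> (supp u = supp v \<longrightarrow>
           (uless u v \<longleftrightarrow> \<not> ugreater u v)
         \<and> (\<not> ugreater u v \<longleftrightarrow> (I_of u \<in> u \<and> I_of v \<in> v \<and> I_of u = I_of v))
         \<and> (ugreater u v \<longleftrightarrow> \<not> uless u v)
         \<and> (\<not> uless u v \<longleftrightarrow> (J_of u \<in> u \<and> J_of v \<in> v \<and> J_of u = J_of v)))"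
proof -
  note u = assms(1) and v = assms(2) and npu = assms(3) and npv = assms(4)
  define a where "a = I_of u"
  define b where "b = I_of v"
  have ia: "initial_seg a" and ib: "initial_seg b"
    unfolding a_def b_def by (rule initial_seg_I_of)+
  have Ju: "J_of u = - a" and Jv: "J_of v = - b"
    unfolding a_def b_def using nonprincipal_J_of_eq u v npu npv by auto
  have compl: "- b \<in> u \<longleftrightarrow> b \<notin> u" "- a \<in> u \<longleftrightarrow> a \<notin> u"
    "- b \<in> v \<longleftrightarrow> b \<notin> v" "- a \<in> v \<longleftrightarrow> a \<notin> v"
    using ultrafilter_Compl_iff u v by blast+
  have "a \<in> u \<Longrightarrow> b \<in> u \<longleftrightarrow> a \<subseteq> b" "b \<in> v \<Longrightarrow> a \<in> v \<longleftrightarrow> b \<subseteq> a"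
    "- a \<in> u \<Longrightarrow> - b \<in> u \<longleftrightarrow> - a \<subseteq> - b" "- b \<in> v \<Longrightarrow> - a \<in> v \<longleftrightarrow> - b \<subseteq> - a"
    using initial_seg_mem_iff[OF u _ ib] initial_seg_mem_iff[OF v _ ia]
      final_seg_mem_iff[OF u _ final_seg_Compl[OF ib]] final_seg_mem_iff[OF v _ final_seg_Compl[OF ia]]
    unfolding a_def b_def Ju Jv by auto
  with initial_seg_linear[OF ia ib] compl show ?thesis
    unfolding uless_nonprincipal_iff[OF u npu] uless_nonprincipal_iff[OF v npv]
      ugreater_nonprincipal_iff[OF u npu] ugreater_nonprincipal_iff[OF v npv]
      supp_nonprincipal[OF u npu] supp_nonprincipal[OF v npv] Ju Jv
      a_def[symmetric] b_def[symmetric]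
    by (cases "a \<in> u"; cases "b \<in> v"; auto)
qed

end
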